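(* Let $\mathcal{F}$ be a fixed hypergraph on $k$ vertices and let $\mathcal{H}$ be a hypergraph on at least $k$ vertices. Then: (1) $\hat{\mathcal{H}}^{k+1}$ has no edge-induced subhypergraph isomorphic to $\mathcal{F}$; (2) if $\mathcal{F}$ has at least one hyperedge, $\hat{\mathcal{H}}^{k+1}$ has no restriction isomorphic to $\mathcal{F}$; (3) if there exists $\ell\le k$ such that $\mathcal{F}$ has strictly fewer than $\binom{k-1}{\ell-1}$ hyperedges of size $\ell$, then $\hat{\mathcal{H}}_{\ell}$ has no subhypergraph isomorphic to $\mathcal{F}$.
   Context: For a hypergraph $\mathcal{H}=(V,\mathcal{F}_0)$: an edge-induced subhypergraph is $(\bigcup_{F\in\mathcal{F}'}F,\mathcal{F}')$ for $\mathcal{F}'\subseteq\mathcal{F}_0$; a restriction is $(V',\{F\in\mathcal{F}_0\mid F\subseteq V'\})$ for $V'\subseteq V$; a subhypergraph is $(V',\{F\cap V'\mid F\in\mathcal{F}_0,\ F\cap V'\neq\emptyset\})$ for $V'\subseteq V$. $\hat{\mathcal{H}}^{m}=(V\cup\{x_1,\dots,x_m\},\{E\cup\{x_1,\dots,x_m\}\mid E\in\mathcal{F}_0\})$ with new vertices $x_1,\dots,x_m$. $\hat{\mathcal{H}}_{\ell}$ has vertex set $V\cup\{x\}$ with $x$ new and hyperedge set $\mathcal{F}_0\cup\{X\cup\{x\}\mid X\subseteq V,\ |X|=\ell\}$. *)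

theory Defs
  imports Main
begin

definition hypergraph :: "'a set \<times> 'a set set \<Rightarrow> bool" where
  "hypergraph H \<longleftrightarrow> finite (fst H) \<and> (\<forall>e\<in>snd H. e \<subseteq> fst H \<and> e \<noteq> {})"

definition hyp_iso :: "'a set \<times> 'a set set \<Rightarrow> 'b set \<times> 'b set set \<Rightarrow> bool" where
  "hyp_iso H G \<longleftrightarrow> (\<exists>f. bij_betw f (fst H) (fst G) \<and> snd G = (\<lambda>e. f ` e) ` snd H)"

definition edge_induced_sub :: "'a set \<times> 'a set set \<Rightarrow> 'a set \<times> 'a set set \<Rightarrow> bool" where
  "edge_induced_sub G H \<longleftrightarrow> (\<exists>F'. F' \<subseteq> snd H \<and> G = (\<Union>F', F'))"

definition restriction :: "'a set \<times> 'a set set \<Rightarrow> 'a set \<times> 'a set set \<Rightarrow> bool" where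
  "restriction G H \<longleftrightarrow> (\<exists>V'. V' \<subseteq> fst H \<and> G = (V', {e \<in> snd H. e \<subseteq> V'}))"

definition subhypergraph :: "'a set \<times> 'a set set \<Rightarrow> 'a set \<times> 'a set set \<Rightarrow> bool" where
  "subhypergraph G H \<longleftrightarrow>
     (\<exists>V'. V' \<subseteq> fst H \<and> G = (V', {e \<inter> V' | e. e \<in> snd H \<and> e \<inter> V' \<noteq> {}}))"

text \<open>\<hat>H^m, with the m new vertices given as a set X (disjoint from V, of cardinality m).\<close>
definition hat_pow :: "'a set \<times> 'a set set \<Rightarrow> 'a set \<Rightarrow> 'a set \<times> 'a set set" where
  "hat_pow H X = (fst H \<union> X, {e \<union> X | e. e \<in> snd H})"

definition hat_ell :: "'a set \<times> 'a set set \<Rightarrow> 'a \<Rightarrow> nat \<Rightarrow> 'a set \<times> 'a set set" where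
  "hat_ell H x l = (fst H \<union> {x}, snd H \<union> {Y \<union> {x} | Y. Y \<subseteq> fst H \<and> card Y = l})"

end

theory Submission
  imports Defs
begin

(* Every hyperedge of H-hat^(k+1) contains all k + 1 new vertices, so an edge-induced
   subhypergraph with an edge, or a restriction containing an edge, has more than k
   vertices.  In a k-vertex subhypergraph of H-hat_l with k <= |V(H)|, some vertex w
   (the new vertex x if present, otherwise any vertex) makes every l-subset through w
   the trace of a hyperedge: pad it by a vertex of H outside the subhypergraph, resp.
   by x.  This gives (k-1 choose l-1) hyperedges of size l, a count preserved by
   isomorphisms. *)

lemma card_fst_eq_if_hyp_iso:
  assumes "hyp_iso G F"
  shows "card (fst G) = card (fst F)"
proof -
  obtain f where "bij_betw f (fst G) (fst F)"
    using assms unfolding hyp_iso_def by blast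
  then show ?thesis
    by (rule bij_betw_same_card)
qed

lemma card_edges_of_card_eq_if_hyp_iso:
  assumes iso: "hyp_iso G F" and edges: "\<forall>e\<in>snd G. e \<subseteq> fst G"
  shows "card {e \<in> snd G. card e = l} = card {e \<in> snd F. card e = l}"
proof -
  obtain f where f: "bij_betw f (fst G) (fst F)" and E: "snd F = image f ` snd G"
    using iso unfolding hyp_iso_def by blast
  have inj: "inj_on f (fst G)"
    using f by (rule bij_betw_imp_inj_on)
  have card_image_edge: "card (f ` e) = card e" if "e \<in> snd G" for e
    using that edges inj_on_subset[OF inj] by (simp add: card_image)
  have "inj_on (image f) {e \<in> snd G. card e = l}"
    using edges by (intro inj_on_subset[OF inj_on_image_Pow[OF inj]]) auto
  then have "card (image f ` {e \<in> snd G. card e = l}) = card {e \<in> snd G. card e = l}"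
    by (rule card_image)
  moreover have "image f ` {e \<in> snd G. card e = l} = {e \<in> snd F. card e = l}"
    unfolding E using card_image_edge by force
  ultimately show ?thesis
    by simp
qed

lemma card_subsets_containing:
  assumes "finite V" and "w \<in> V" and "1 \<le> l"
  shows "card {e. w \<in> e \<and> e \<subseteq> V \<and> card e = l} = (card V - 1) choose (l - 1)"
proof -
  have "bij_betw (insert w) {Z. Z \<subseteq> V - {w} \<and> card Z = l - 1}
      {e. w \<in> e \<and> e \<subseteq> V \<and> card e = l}"
  proof (rule bij_betw_byWitness[where f' = "\<lambda>e. e - {w}"])
    show "insert w ` {Z. Z \<subseteq> V - {w} \<and> card Z = l - 1}
        \<subseteq> {e. w \<in> e \<and> e \<subseteq> V \<and> card e = l}"
      using assms by (auto simp: finite_subset card_insert_if)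
    show "(\<lambda>e. e - {w}) ` {e. w \<in> e \<and> e \<subseteq> V \<and> card e = l}
        \<subseteq> {Z. Z \<subseteq> V - {w} \<and> card Z = l - 1}"
      by auto
  qed auto
  then have "card {e. w \<in> e \<and> e \<subseteq> V \<and> card e = l}
      = card {Z. Z \<subseteq> V - {w} \<and> card Z = l - 1}"
    by (simp add: bij_betw_same_card)
  also have "\<dots> = (card V - 1) choose (l - 1)"
    using assms by (simp add: n_subsets)
  finally show ?thesis .
qed

lemma hat_pow_edge_contains:
  "e \<in> snd (hat_pow H X) \<Longrightarrow> X \<subseteq> e"
  unfolding hat_pow_def by auto

lemma edge_induced_sub_hat_pow_card:
  assumes "edge_induced_sub G (hat_pow H X)" and "hypergraph H" and "finite X"
  shows "fst G = {} \<or> card X \<le> card (fst G)"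
proof -
  obtain F' where F': "F' \<subseteq> snd (hat_pow H X)" and G: "G = (\<Union>F', F')"
    using assms(1) unfolding edge_induced_sub_def by blast
  have "\<Union>F' \<subseteq> fst H \<union> X"
    using F' assms(2) unfolding hat_pow_def hypergraph_def by auto
  moreover have "finite (fst H \<union> X)"
    using assms(2,3) unfolding hypergraph_def by blast
  moreover have "F' \<noteq> {} \<Longrightarrow> X \<subseteq> \<Union>F'"
    using F' hat_pow_edge_contains by blast
  ultimately show ?thesis
    using G by (metis card_mono finite_subset Union_empty fst_conv)
qed

lemma restriction_hat_pow_card:
  assumes "restriction G (hat_pow H X)" and "hypergraph H" and "finite X"
    and "snd G \<noteq> {}"
  shows "card X \<le> card (fst G)"
proof -
  obtain V' where V': "V' \<subseteq> fst H \<union> X"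
    and G: "G = (V', {e \<in> snd (hat_pow H X). e \<subseteq> V'})"
    using assms(1) unfolding restriction_def hat_pow_def by auto
  have "X \<subseteq> V'"
    using assms(4) G hat_pow_edge_contains by fastforce
  moreover have "finite V'"
    using V' assms(2,3) finite_subset unfolding hypergraph_def by blast
  ultimately show ?thesis
    using G by (simp add: card_mono)
qed

lemma hypergraph_hat_ell:
  assumes "hypergraph H"
  shows "hypergraph (hat_ell H x l)"
  using assms unfolding hypergraph_def hat_ell_def by auto

lemma hypergraph_subhypergraph:
  assumes "subhypergraph G H" and "hypergraph H"
  shows "hypergraph G"
  using assms finite_subset unfolding subhypergraph_def hypergraph_def by auto

lemma subhypergraph_hat_ell_contains_star:
  assumes sub: "subhypergraph G (hat_ell H x l)" and "hypergraph H" and "x \<notin> fst H"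
    and "fst G \<noteq> {}" and "card (fst G) \<le> card (fst H)"
  shows "\<exists>w\<in>fst G. {e. w \<in> e \<and> e \<subseteq> fst G \<and> card e = l} \<subseteq> snd G"
proof -
  obtain V' where V': "V' \<subseteq> fst H \<union> {x}"
    and G: "G = (V', {e \<inter> V' | e. e \<in> snd (hat_ell H x l) \<and> e \<inter> V' \<noteq> {}})"
    using sub unfolding subhypergraph_def hat_ell_def by auto
  have finV': "finite V'"
    using hypergraph_subhypergraph[OF sub hypergraph_hat_ell[OF \<open>hypergraph H\<close>]] G
    unfolding hypergraph_def by simp
  have trace_edge: "e \<in> snd G"
    if "Y \<subseteq> fst H" "card Y = l" "(Y \<union> {x}) \<inter> V' = e" "e \<noteq> {}" for Y e
  proof -
    have "Y \<union> {x} \<in> snd (hat_ell H x l)"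
      using that(1,2) unfolding hat_ell_def by auto
    then show ?thesis
      unfolding G snd_conv using that(3,4) by blast
  qed
  show ?thesis
  proof (cases "x \<in> V'")
    case True
    have "0 < card V'"
      using finV' assms(4) G by (simp add: card_gt_0_iff)
    then have "card (V' - {x}) < card (fst H)"
      using True assms(5) G by simp
    then have "\<not> fst H \<subseteq> V' - {x}"
      using finV' by (meson card_mono finite_Diff not_le)
    then obtain y where y: "y \<in> fst H" "y \<notin> V'"
      using \<open>x \<notin> fst H\<close> by blast
    have "e \<in> snd G" if e: "x \<in> e" "e \<subseteq> V'" "card e = l" for e
    proof (rule trace_edge)
      show "insert y (e - {x}) \<subseteq> fst H"
        using e y V' by auto
      have "finite e"
        using e finV' finite_subset by blast
      moreover have "y \<notin> e"
        using e y by blast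
      ultimately have "card (insert y (e - {x})) = Suc (card e - 1)"
        using e by (simp add: card_Diff_singleton)
      moreover have "card e \<noteq> 0"
        using e \<open>finite e\<close> card_0_eq by blast
      ultimately show "card (insert y (e - {x})) = l"
        using e(3) by simp
      show "(insert y (e - {x}) \<union> {x}) \<inter> V' = e"
        using e y by auto
      show "e \<noteq> {}"
        using e by blast
    qed
    then show ?thesis
      using True unfolding G fst_conv by blast
  next
    case False
    obtain w where w: "w \<in> V'"
      using assms(4) G by auto
    have "e \<in> snd G" if e: "w \<in> e" "e \<subseteq> V'" "card e = l" for e
    proof (rule trace_edge)
      show "e \<subseteq> fst H"
        using e V' False by blast
      show "card e = l"
        by (fact e(3))
      show "(e \<union> {x}) \<inter> V' = e"
        using e False by blast
      show "e \<noteq> {}"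
        using e by blast
    qed
    then show ?thesis
      using w unfolding G fst_conv by blast
  qed
qed

lemma subhypergraph_hat_ell_card_edges_of_card:
  assumes sub: "subhypergraph G (hat_ell H x l)" and H: "hypergraph H" and "x \<notin> fst H"
    and "1 \<le> l" and "fst G \<noteq> {}" and "card (fst G) \<le> card (fst H)"
  shows "(card (fst G) - 1) choose (l - 1) \<le> card {e \<in> snd G. card e = l}"
proof -
  have "hypergraph G"
    using hypergraph_subhypergraph[OF sub hypergraph_hat_ell[OF H]] .
  then have fin: "finite (fst G)" and edges: "snd G \<subseteq> Pow (fst G)"
    unfolding hypergraph_def by auto
  obtain w where w: "w \<in> fst G" and star: "{e. w \<in> e \<and> e \<subseteq> fst G \<and> card e = l} \<subseteq> snd G"
    using subhypergraph_hat_ell_contains_star[OF sub H] assms(3,5,6) by blast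
  have "(card (fst G) - 1) choose (l - 1) = card {e. w \<in> e \<and> e \<subseteq> fst G \<and> card e = l}"
    using card_subsets_containing[OF fin w \<open>1 \<le> l\<close>] by simp
  also have "\<dots> \<le> card {e \<in> snd G. card e = l}"
  proof (rule card_mono)
    have "{e \<in> snd G. card e = l} \<subseteq> Pow (fst G)"
      using edges by blast
    moreover have "finite (Pow (fst G))"
      using fin by simp
    ultimately show "finite {e \<in> snd G. card e = l}"
      by (rule finite_subset)
    show "{e. w \<in> e \<and> e \<subseteq> fst G \<and> card e = l} \<subseteq> {e \<in> snd G. card e = l}"
      using star by blast
  qed
  finally show ?thesis .
qed

theorem lemma7:
  fixes F :: "'b set \<times> 'b set set" and H :: "'a set \<times> 'a set set"
    and X :: "'a set" and k :: nat
  assumes "hypergraph F" and "card (fst F) = k" and "1 \<le> k"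
    and "hypergraph H" and "card (fst H) \<ge> k"
    and "finite X" and "card X = k + 1" and "X \<inter> fst H = {}"
  shows "(\<nexists>G. edge_induced_sub G (hat_pow H X) \<and> hyp_iso G F)
    \<and> (snd F \<noteq> {} \<longrightarrow> (\<nexists>G. restriction G (hat_pow H X) \<and> hyp_iso G F))
    \<and> (\<forall>l x. 1 \<le> l \<and> l \<le> k \<and> x \<notin> fst H
          \<and> card {e \<in> snd F. card e = l} < (k - 1) choose (l - 1)
        \<longrightarrow> (\<nexists>G. subhypergraph G (hat_ell H x l) \<and> hyp_iso G F))"
proof (intro conjI impI allI notI)
  have k: "card (fst G) = k" if "hyp_iso G F" for G :: "'a set \<times> 'a set set"
    using card_fst_eq_if_hyp_iso[OF that] assms(2) by simp
  show False if "\<exists>G. edge_induced_sub G (hat_pow H X) \<and> hyp_iso G F"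
  proof -
    from that obtain G where sub: "edge_induced_sub G (hat_pow H X)" and iso: "hyp_iso G F"
      by blast
    show False
      using edge_induced_sub_hat_pow_card[OF sub assms(4,6)] k[OF iso] assms(3,7) by auto
  qed
  show False if "snd F \<noteq> {}" and "\<exists>G. restriction G (hat_pow H X) \<and> hyp_iso G F"
  proof -
    from that(2) obtain G where sub: "restriction G (hat_pow H X)" and iso: "hyp_iso G F"
      by blast
    have "snd G \<noteq> {}"
      using iso \<open>snd F \<noteq> {}\<close> unfolding hyp_iso_def by auto
    then show False
      using restriction_hat_pow_card[OF sub assms(4,6)] k[OF iso] assms(7) by simp
  qed
  fix l x
  assume l: "1 \<le> l \<and> l \<le> k \<and> x \<notin> fst H
      \<and> card {e \<in> snd F. card e = l} < (k - 1) choose (l - 1)"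
    and "\<exists>G. subhypergraph G (hat_ell H x l) \<and> hyp_iso G F"
  then obtain G where sub: "subhypergraph G (hat_ell H x l)" and iso: "hyp_iso G F"
    by blast
  have "hypergraph G"
    using hypergraph_subhypergraph[OF sub hypergraph_hat_ell[OF assms(4)]] .
  then have "card {e \<in> snd G. card e = l} = card {e \<in> snd F. card e = l}"
    using card_edges_of_card_eq_if_hyp_iso[OF iso] unfolding hypergraph_def by blast
  moreover have "(k - 1) choose (l - 1) \<le> card {e \<in> snd G. card e = l}"
    using subhypergraph_hat_ell_card_edges_of_card[OF sub assms(4)] l k[OF iso] assms(3,5)
    by fastforce
  ultimately show False
    using l by simp
qed

end
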